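(* Let $u$ be a word over a finite alphabet and let $v$ be a run in $u$, with shortest period $p$ and exponent $\sigma(v)$. If $p=1$, then $\sigma(v)=|H(v)|+1$. If $p\ge 2$, then $\lceil \sigma(v)\rceil \le \frac{|H(v)|}{2}+3$.
   Context: For a word $u=u_1\cdots u_m$, the (shortest) period is the smallest positive integer $p$ with $u_i=u_{i+p}$ for all $1\le i\le m-p$; $u[i..j]=u_i\cdots u_j$. A run in $u$ is an interval $[i..j]$ such that the period $p$ of $u[i..j]$ satisfies $2p\le j-i+1$, and $u[i-1]\ne u[i+p-1]$ (or $i=1$) and $u[j-p+1]\ne u[j+1]$ (or $j=|u|$); its exponent is $\sigma(v)=(j-i+1)/p$. Words $x,y$ are cyclically equivalent if $x=st$, $y=ts$ for some words $s,t$. The inter-positions of $u$ are the $|u|-1$ positions lying between consecutive letters of $u$. Handles: for a run $v$ with period $p$, let $w$ be the prefix of (the factor) $v$ of length $p$, and let $w_{\min}$, $w_{\max}$ be the lexicographically minimal and maximal words cyclically equivalent to $w$. Then $H(v)$ is the set of inter-positions defined by: (a) if $w_{\min}=w_{\max}$, $H(v)$ consists of all inter-positions lying within $v$; (b) if $w_{\min}\ne w_{\max}$, $H(v)$ consists of the inter-positions lying between two consecutive (adjacent) occurrences of $w_{\min}$ inside $v$ and those lying between two consecutive occurrences of $w_{\max}$ inside $v$. *)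

theory Defs
  imports Complex_Main "HOL-Library.List_Lexorder"
begin

(* Words are lists; positions in the paper are 1-based: u_k = u ! (k - 1). *)

definition letter :: "'a list \<Rightarrow> nat \<Rightarrow> 'a" where
  "letter u k = u ! (k - 1)"

(* u[i..j] = u_i ... u_j  (1-based, i \<le> j) *)
definition factor :: "'a list \<Rightarrow> nat \<Rightarrow> nat \<Rightarrow> 'a list" where
  "factor u i j = take (Suc j - i) (drop (i - 1) u)"

definition is_period :: "'a list \<Rightarrow> nat \<Rightarrow> bool" where
  "is_period w p \<longleftrightarrow> 0 < p \<and> (\<forall>k. k + p < length w \<longrightarrow> w ! k = w ! (k + p))"

definition period :: "'a list \<Rightarrow> nat" where
  "period w = (LEAST p. is_period w p)"

definition is_run :: "'a list \<Rightarrow> nat \<Rightarrow> nat \<Rightarrow> bool" where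
  "is_run u i j \<longleftrightarrow> 1 \<le> i \<and> i \<le> j \<and> j \<le> length u \<and>
     (let p = period (factor u i j) in
        2 * p \<le> Suc j - i \<and>
        (i = 1 \<or> letter u (i - 1) \<noteq> letter u (i + p - 1)) \<and>
        (j = length u \<or> letter u (j - p + 1) \<noteq> letter u (j + 1)))"

definition run_exponent :: "'a list \<Rightarrow> nat \<Rightarrow> nat \<Rightarrow> real" where
  "run_exponent u i j = real (Suc j - i) / real (period (factor u i j))"

definition cyc_class :: "'a list \<Rightarrow> 'a list set" where
  "cyc_class w = {x. \<exists>s t. w = s @ t \<and> x = t @ s}"

(* lexicographically minimal / maximal conjugates (lexicographic order of List_Lexorder) *)
definition w_min :: "'a::linorder list \<Rightarrow> 'a list" where
  "w_min w = Min (cyc_class w)"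

definition w_max :: "'a::linorder list \<Rightarrow> 'a list" where
  "w_max w = Max (cyc_class w)"

definition occ_in :: "'a list \<Rightarrow> nat \<Rightarrow> nat \<Rightarrow> 'a list \<Rightarrow> nat \<Rightarrow> bool" where
  "occ_in u i j x q \<longleftrightarrow> i \<le> q \<and> q + length x - 1 \<le> j \<and> factor u q (q + length x - 1) = x"

(* inter-position k lies between letters u_k and u_{k+1}, 1 \<le> k \<le> |u|-1.
   Inter-positions lying between two consecutive (adjacent) occurrences of x inside [i..j]:
   an occurrence ends at u_k and the next one starts at u_{k+1}. *)
definition between_occs :: "'a list \<Rightarrow> nat \<Rightarrow> nat \<Rightarrow> 'a list \<Rightarrow> nat set" where
  "between_occs u i j x =
     {k. \<exists>q. occ_in u i j x q \<and> occ_in u i j x (q + length x) \<and> k = q + length x - 1}"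

definition handles :: "'a::linorder list \<Rightarrow> nat \<Rightarrow> nat \<Rightarrow> nat set" where
  "handles u i j =
     (let w = take (period (factor u i j)) (factor u i j) in
      if w_min w = w_max w then {k. i \<le> k \<and> k < j}
      else between_occs u i j (w_min w) \<union> between_occs u i j (w_max w))"

end

theory Submission
  imports Defs
begin

text \<open>
  Write \<open>L\<close> for the length of the run \<open>v\<close>, \<open>p\<close> for its period, \<open>w\<close> for its prefix of length
  \<open>p\<close> and \<open>m = L div p\<close>. If \<open>p = 1\<close>, all conjugates of \<open>w\<close> coincide, so every inter-position
  of \<open>v\<close> is a handle and \<open>\<sigma>(v) = L = |H(v)| + 1\<close>. If \<open>p \<ge> 2\<close>, then \<open>rotate 1 w \<noteq> w\<close>
  (otherwise \<open>v\<close> would have period 1), so \<open>w\<^sub>m\<^sub>i\<^sub>n = rotate r w\<close> and \<open>w\<^sub>m\<^sub>a\<^sub>x = rotate r' w\<close>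
  with \<open>r \<noteq> r'\<close> in \<open>[0, p)\<close>. The conjugate \<open>rotate s w\<close> occurs in \<open>v\<close> at offsets
  \<open>s, s + p, s + 2p, \<dots>\<close>; adjacent occurrences give \<open>m - 2\<close> handles for each of \<open>s = r, r'\<close>,
  and these handle sets are disjoint because they lie in different residue classes modulo \<open>p\<close>.
  Hence \<open>|H(v)| \<ge> 2(m - 2)\<close>, while \<open>\<lceil>\<sigma>(v)\<rceil> = \<lceil>L / p\<rceil> \<le> m + 1\<close>.
\<close>

lemma is_period_nth_mod:
  assumes "is_period w p" "k < length w"
  shows "w ! k = w ! (k mod p)"
  using assms(2)
proof (induction k rule: less_induct)
  case (less k)
  have "0 < p" using assms(1) unfolding is_period_def by auto
  show ?case
  proof (cases "k < p")
    case False
    then have "w ! (k - p) = w ! ((k - p) mod p)" using less \<open>0 < p\<close> by auto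
    moreover have "w ! (k - p) = w ! k"
      using assms(1) less.prems False unfolding is_period_def by (metis le_add_diff_inverse2 not_less)
    moreover have "(k - p) mod p = k mod p" using False by (simp add: mod_if)
    ultimately show ?thesis by simp
  qed simp
qed

lemma is_period_length: "w \<noteq> [] \<Longrightarrow> is_period w (length w)"
  unfolding is_period_def by auto

lemma period_is_period: "w \<noteq> [] \<Longrightarrow> is_period w (period w)"
  unfolding period_def by (rule LeastI) (rule is_period_length)

lemma period_le: "is_period w q \<Longrightarrow> period w \<le> q"
  unfolding period_def by (rule Least_le)

lemma period_Nil: "period [] = 1"
  unfolding period_def is_period_def by (rule Least_equality) auto

lemma cyc_class_conv_rotate: "cyc_class w = (\<lambda>n. rotate n w) ` {..length w}"
proof (intro equalityI subsetI)
  fix x assume "x \<in> cyc_class w"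
  then obtain s t where "w = s @ t" "x = t @ s" unfolding cyc_class_def by auto
  then show "x \<in> (\<lambda>n. rotate n w) ` {..length w}"
    by (intro image_eqI[of _ _ "length s"]) (auto simp: rotate_append)
next
  fix x assume "x \<in> (\<lambda>n. rotate n w) ` {..length w}"
  then obtain n where "n \<le> length w" "x = rotate n w" by auto
  then have "w = take n w @ drop n w \<and> x = drop n w @ take n w"
    by (metis append_take_drop_id length_take min_absorb2 rotate_append)
  then show "x \<in> cyc_class w" unfolding cyc_class_def by blast
qed

lemma finite_cyc_class: "finite (cyc_class w)"
  by (simp add: cyc_class_conv_rotate)

lemma rotate_in_cyc_class: "rotate n w \<in> cyc_class w"
proof (cases "w = []")
  case False
  then have "n mod length w \<le> length w" by (simp add: less_imp_le)
  then show ?thesis by (subst rotate_conv_mod) (auto simp: cyc_class_conv_rotate)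
qed (simp add: cyc_class_conv_rotate)

lemma cyc_class_obtain_rotate:
  assumes "x \<in> cyc_class w" "w \<noteq> []"
  obtains r where "r < length w" "x = rotate r w"
proof -
  obtain n where "x = rotate n w" using assms(1) by (auto simp: cyc_class_conv_rotate)
  then have "x = rotate (n mod length w) w" by (metis rotate_conv_mod)
  then show ?thesis using assms(2) by (intro that[of "n mod length w"]) simp_all
qed

lemma w_min_in_cyc_class: "w_min w \<in> cyc_class w"
  unfolding w_min_def using finite_cyc_class rotate_in_cyc_class by (intro Min_in) blast+

lemma w_max_in_cyc_class: "w_max w \<in> cyc_class w"
  unfolding w_max_def using finite_cyc_class rotate_in_cyc_class by (intro Max_in) blast+

lemma cyc_class_length_le_1: "length w \<le> 1 \<Longrightarrow> cyc_class w = {w}"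
  by (auto simp: cyc_class_conv_rotate le_Suc_eq length_Suc_conv rotate_in_cyc_class)

lemma w_min_eq_w_max_imp_cyc_class:
  fixes w :: "'a::linorder list"
  assumes "w_min w = w_max w"
  shows "cyc_class w = {w}"
proof -
  have "x = w" if "x \<in> cyc_class w" for x
  proof -
    have "w_min w \<le> x" "x \<le> w_max w" "w_min w \<le> w" "w \<le> w_max w"
      using that rotate_in_cyc_class[of 0 w] Min_le[OF finite_cyc_class] Max_ge[OF finite_cyc_class]
      unfolding w_min_def w_max_def by auto
    with assms show ?thesis by auto
  qed
  then show ?thesis using rotate_in_cyc_class[of 0 w] by auto
qed

lemma rotate1_take_period_neq:
  assumes "2 \<le> period v"
  shows "rotate 1 (take (period v) v) \<noteq> take (period v) v"
proof
  let ?p = "period v" and ?w = "take (period v) v"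
  assume rot: "rotate 1 ?w = ?w"
  have "v \<noteq> []" using assms by (auto simp: period_Nil)
  then have per: "is_period v ?p" and "?p \<le> length v"
    using period_is_period period_le[OF is_period_length] by auto
  have "v ! k = v ! (k + 1)" if "k + 1 < length v" for k
  proof -
    have "v ! k = ?w ! (k mod ?p)" "v ! (k + 1) = ?w ! ((k + 1) mod ?p)"
      using is_period_nth_mod[OF per] that assms by auto
    moreover have "rotate 1 ?w ! (k mod ?p) = ?w ! ((k + 1) mod ?p)"
      using nth_rotate[of "k mod ?p" ?w 1] \<open>?p \<le> length v\<close> assms by (simp add: mod_simps)
    ultimately show ?thesis using rot by simp
  qed
  then have "is_period v 1" unfolding is_period_def by simp
  with assms show False using period_le by fastforce
qed

lemma w_min_neq_w_max_take_period:
  assumes "2 \<le> period v"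
  shows "w_min (take (period v) v) \<noteq> w_max (take (period v) v)"
  using w_min_eq_w_max_imp_cyc_class rotate_in_cyc_class rotate1_take_period_neq[OF assms]
  by blast

lemma length_factor: "1 \<le> i \<Longrightarrow> j \<le> length u \<Longrightarrow> length (factor u i j) = Suc j - i"
  unfolding factor_def by auto

lemma nth_factor:
  "1 \<le> i \<Longrightarrow> j \<le> length u \<Longrightarrow> t < Suc j - i \<Longrightarrow> factor u i j ! t = u ! (i - 1 + t)"
  unfolding factor_def by auto

lemma occ_in_rotate_take_period:
  assumes "1 \<le> i" "j \<le> length u" "is_period (factor u i j) p" "s + (k + 1) * p \<le> Suc j - i"
  shows "occ_in u i j (rotate s (take p (factor u i j))) (i + s + k * p)"
proof -
  let ?v = "factor u i j" and ?w = "take p (factor u i j)" and ?q = "i + s + k * p"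
  have "0 < p" using assms(3) unfolding is_period_def by simp
  have len_w: "length ?w = p"
    using assms(4) length_factor[OF assms(1,2)] by (simp add: min_absorb1)
  have end_le: "?q + p - 1 \<le> j" using assms(1,4) \<open>0 < p\<close> by (simp add: algebra_simps)
  have "factor u ?q (?q + p - 1) ! t = rotate s ?w ! t" if "t < p" for t
  proof -
    have "factor u ?q (?q + p - 1) ! t = ?v ! (s + t + k * p)"
      using that assms end_le by (simp add: nth_factor algebra_simps)
    also have "\<dots> = ?v ! ((s + t + k * p) mod p)"
      using is_period_nth_mod[OF assms(3)] that assms(4) length_factor[OF assms(1,2)]
      by (simp add: algebra_simps)
    also have "\<dots> = ?v ! ((s + t) mod p)"
      by (simp only: mod_mult_self1)
    also have "\<dots> = rotate s ?w ! t"
      using that len_w \<open>0 < p\<close> by (simp add: nth_rotate add.commute)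
    finally show ?thesis .
  qed
  moreover have "length (factor u ?q (?q + p - 1)) = p"
    using length_factor[of ?q "?q + p - 1" u] assms end_le \<open>0 < p\<close> by simp
  ultimately show ?thesis
    unfolding occ_in_def using len_w end_le by (simp add: nth_equalityI)
qed

lemma between_occs_rotate_take_period:
  assumes "1 \<le> i" "j \<le> length u" "is_period (factor u i j) p" "s + (k + 2) * p \<le> Suc j - i"
  shows "i + s + (k + 1) * p - 1 \<in> between_occs u i j (rotate s (take p (factor u i j)))"
proof -
  let ?x = "rotate s (take p (factor u i j))" and ?q = "i + s + k * p"
  have len: "length ?x = p"
    using assms(4) length_factor[OF assms(1,2)] by (simp add: min_absorb1)
  have "occ_in u i j ?x ?q"
    using assms(4) by (intro occ_in_rotate_take_period[OF assms(1-3)]) (simp add: algebra_simps)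
  moreover have "occ_in u i j ?x (?q + length ?x)"
    using occ_in_rotate_take_period[OF assms(1-3), of s "k + 1"] assms(4) len
    by (simp add: algebra_simps)
  moreover have "i + s + (k + 1) * p - 1 = ?q + length ?x - 1"
    using len by simp
  ultimately show ?thesis
    unfolding between_occs_def by blast
qed

lemma between_occs_subset_atMost: "between_occs u i j x \<subseteq> {..j}"
  unfolding between_occs_def occ_in_def by auto

lemma finite_handles: "finite (handles u i j)"
  unfolding handles_def Let_def
  by (simp add: finite_subset[OF between_occs_subset_atMost])

lemma handles_period_one:
  assumes "period (factor u i j) = 1"
  shows "handles u i j = {i..<j}"
proof -
  let ?w = "take 1 (factor u i j)"
  have "w_min ?w = w_max ?w"
    by (simp add: w_min_def w_max_def cyc_class_length_le_1)
  then show ?thesis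
    unfolding handles_def Let_def assms by auto
qed

lemma between_occs_rotate_take_period_superset:
  assumes "1 \<le> i" "j \<le> length u" "is_period (factor u i j) p" "s < p"
  shows "(\<lambda>k. i - 1 + s + (k + 1) * p) ` {..<(Suc j - i) div p - 2}
           \<subseteq> between_occs u i j (rotate s (take p (factor u i j)))"
proof
  fix x assume "x \<in> (\<lambda>k. i - 1 + s + (k + 1) * p) ` {..<(Suc j - i) div p - 2}"
  then obtain k where "k < (Suc j - i) div p - 2" and x: "x = i + s + (k + 1) * p - 1"
    using assms(1) by auto
  then have "k + 3 \<le> (Suc j - i) div p" by simp
  have "s + (k + 2) * p < (k + 3) * p" using assms(4) by (simp add: algebra_simps)
  also have "\<dots> \<le> (Suc j - i) div p * p" using \<open>k + 3 \<le> _\<close> by (rule mult_le_mono1)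
  also have "\<dots> \<le> Suc j - i" by simp
  finally show "x \<in> between_occs u i j (rotate s (take p (factor u i j)))"
    using between_occs_rotate_take_period[OF assms(1-3)] x by simp
qed

lemma disjoint_progressions:
  fixes r r' p :: nat
  assumes "r < p" "r' < p" "r \<noteq> r'"
  shows "(\<lambda>k. c + r + (k + 1) * p) ` K \<inter> (\<lambda>k. c + r' + (k + 1) * p) ` K' = {}"
proof -
  have "r + (k + 1) * p \<noteq> r' + (k' + 1) * p" for k k'
  proof
    assume eq: "r + (k + 1) * p = r' + (k' + 1) * p"
    have "r = (r + (k + 1) * p) mod p" using assms(1) by (simp only: mod_mult_self1 mod_less)
    also have "\<dots> = (r' + (k' + 1) * p) mod p" by (simp only: eq)
    also have "\<dots> = r'" using assms(2) by (simp only: mod_mult_self1 mod_less)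
    finally show False using assms(3) by simp
  qed
  then show ?thesis by auto
qed

lemma card_handles_ge:
  assumes "1 \<le> i" "j \<le> length u" "2 \<le> period (factor u i j)"
  shows "2 * ((Suc j - i) div period (factor u i j) - 2) \<le> card (handles u i j)"
proof -
  let ?v = "factor u i j"
  define p where "p = period ?v"
  define w where "w = take p ?v"
  define m where "m = (Suc j - i) div p"
  define A where "A s = (\<lambda>k. i - 1 + s + (k + 1) * p) ` {..<m - 2}" for s
  have "?v \<noteq> []" using assms(3) by (auto simp: period_Nil)
  then have per: "is_period ?v p" and "p \<le> length ?v"
    unfolding p_def using period_is_period period_le[OF is_period_length] by auto
  then have "length w = p" unfolding w_def by simp
  have "0 < p" using assms(3) p_def by simp
  then have "w \<noteq> []" using \<open>length w = p\<close> by auto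
  obtain r where r: "r < p" "w_min w = rotate r w"
    using cyc_class_obtain_rotate[OF w_min_in_cyc_class \<open>w \<noteq> []\<close>] \<open>length w = p\<close> by metis
  obtain r' where r': "r' < p" "w_max w = rotate r' w"
    using cyc_class_obtain_rotate[OF w_max_in_cyc_class \<open>w \<noteq> []\<close>] \<open>length w = p\<close> by metis
  have neq: "w_min w \<noteq> w_max w"
    using w_min_neq_w_max_take_period[OF assms(3)] unfolding w_def p_def .
  then have "r \<noteq> r'" using r r' by auto
  have card_A: "card (A s) = m - 2" for s
    unfolding A_def using \<open>0 < p\<close> by (subst card_image) (auto simp: inj_on_def)
  have A_sub: "A s \<subseteq> between_occs u i j (rotate s w)" if "s < p" for s
    using between_occs_rotate_take_period_superset[OF assms(1,2) per that]
    unfolding A_def m_def w_def .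
  have "handles u i j = between_occs u i j (w_min w) \<union> between_occs u i j (w_max w)"
    using neq unfolding handles_def Let_def w_def p_def by simp
  then have "A r \<union> A r' \<subseteq> handles u i j"
    using A_sub[OF r(1)] A_sub[OF r'(1)] r(2) r'(2) by auto
  moreover have "card (A r \<union> A r') = 2 * (m - 2)"
    using disjoint_progressions[OF r(1) r'(1) \<open>r \<noteq> r'\<close>] card_A
    by (simp add: card_Un_disjoint A_def)
  ultimately have "2 * (m - 2) \<le> card (handles u i j)"
    by (metis card_mono finite_handles)
  then show ?thesis unfolding m_def p_def .
qed

lemma ceiling_of_nat_divide_le: "\<lceil>real n / real p\<rceil> \<le> int (n div p) + 1"
proof (cases "p = 0")
  case False
  then have "n \<le> (n div p + 1) * p"
    using dividend_less_div_times[of p n] by simp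
  then have "real n \<le> real ((n div p + 1) * p)"
    by (simp only: of_nat_le_iff)
  then have "real n / real p \<le> of_int (int (n div p) + 1)"
    using False by (simp add: divide_le_eq algebra_simps)
  then show ?thesis by (rule ceiling_le)
qed simp

theorem lemma1:
  fixes u :: "'a::{linorder, finite} list" and i j :: nat
  assumes "is_run u i j"
  shows "(period (factor u i j) = 1 \<longrightarrow>
            run_exponent u i j = real (card (handles u i j)) + 1)
       \<and> (period (factor u i j) \<ge> 2 \<longrightarrow>
            real_of_int \<lceil>run_exponent u i j\<rceil> \<le> real (card (handles u i j)) / 2 + 3)"
proof -
  have "1 \<le> i" "i \<le> j" "j \<le> length u" using assms unfolding is_run_def by auto
  show ?thesis
  proof (intro conjI impI)
    assume "period (factor u i j) = 1"
    then show "run_exponent u i j = real (card (handles u i j)) + 1"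
      using \<open>i \<le> j\<close> by (simp add: run_exponent_def handles_period_one)
  next
    assume "2 \<le> period (factor u i j)"
    let ?m = "(Suc j - i) div period (factor u i j)"
    have "\<lceil>run_exponent u i j\<rceil> \<le> int ?m + 1"
      unfolding run_exponent_def by (rule ceiling_of_nat_divide_le)
    moreover have "2 * (?m - 2) \<le> card (handles u i j)"
      using card_handles_ge \<open>1 \<le> i\<close> \<open>j \<le> length u\<close> \<open>2 \<le> period (factor u i j)\<close> .
    then have "2 * real ?m \<le> real (card (handles u i j)) + 4" by linarith
    ultimately show "real_of_int \<lceil>run_exponent u i j\<rceil> \<le> real (card (handles u i j)) / 2 + 3"
      by linarith
  qed
qed

end
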